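(* Let $t(x_1,\dots,x_n)$ be a Łukasiewicz $\mu$-term and $\vec r\in[0,1]^n$. For each threshold modality $\mathbb P_{\rtimes r}$, namely $\mathbb P_{>0}$, $\mathbb P_{=1}$, $\mathbb P_{>r}$ and $\mathbb P_{\ge r}$ with $r\in(0,1)$, one has $(\mathbb P_{\rtimes r}t)(\vec r)=1$ if $t(\vec r)\rtimes r$ holds, and $(\mathbb P_{\rtimes r}t)(\vec r)=0$ otherwise (where $\rtimes r$ stands for $>0$, $=1$, $>r$, $\ge r$ respectively).
   Context: Łukasiewicz $\mu$-terms: $t::=x\mid\underline0\mid\underline1\mid r\,t\mid t\sqcup t\mid t\sqcap t\mid t\oplus t\mid t\odot t\mid\mu x.t\mid\nu x.t$, with $r\in[0,1]$ real ($\mu,\nu$ bind). Value at $\vec r\in[0,1]^n$: $x_i\mapsto r_i$, constants $0,1$, $r\,t\mapsto r\cdot t(\vec r)$, $\sqcup,\sqcap$ max/min, $t_1\oplus t_2\mapsto\min(t_1(\vec r)+t_2(\vec r),1)$, $t_1\odot t_2\mapsto\max(t_1(\vec r)+t_2(\vec r)-1,0)$, $\mu y.t$, $\nu y.t$ the least/greatest fixed points on $[0,1]$ of $r'\mapsto t(\vec r,r')$. $\underline r$ denotes $r\,\underline1$. Threshold modalities: $\mathbb P_{>0}t=\mu y.(y\oplus t)$, $\mathbb P_{=1}t=\nu y.(y\odot t)$, $\mathbb P_{>r}t=\mathbb P_{>0}(t\odot\underline{1-r})$, $\mathbb P_{\ge r}t=\mathbb P_{=1}(t\oplus\underline{1-r})$,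 for $r\in(0,1)$ and $y$ not occurring in $t$. *)

theory Defs
  imports Complex_Main
begin

datatype lterm =
    Var nat
  | Zero
  | One
  | Scale real lterm
  | Join lterm lterm
  | Meet lterm lterm
  | OPlus lterm lterm
  | OTimes lterm lterm
  | Mu nat lterm
  | Nu nat lterm

fun wf_lterm :: "lterm \<Rightarrow> bool" where
  "wf_lterm (Var x) = True"
| "wf_lterm Zero = True"
| "wf_lterm One = True"
| "wf_lterm (Scale r t) = (0 \<le> r \<and> r \<le> 1 \<and> wf_lterm t)"
| "wf_lterm (Join a b) = (wf_lterm a \<and> wf_lterm b)"
| "wf_lterm (Meet a b) = (wf_lterm a \<and> wf_lterm b)"
| "wf_lterm (OPlus a b) = (wf_lterm a \<and> wf_lterm b)"
| "wf_lterm (OTimes a b) = (wf_lterm a \<and> wf_lterm b)"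
| "wf_lterm (Mu x t) = wf_lterm t"
| "wf_lterm (Nu x t) = wf_lterm t"

fun vars :: "lterm \<Rightarrow> nat set" where
  "vars (Var x) = {x}"
| "vars Zero = {}"
| "vars One = {}"
| "vars (Scale r t) = vars t"
| "vars (Join a b) = vars a \<union> vars b"
| "vars (Meet a b) = vars a \<union> vars b"
| "vars (OPlus a b) = vars a \<union> vars b"
| "vars (OTimes a b) = vars a \<union> vars b"
| "vars (Mu x t) = insert x (vars t)"
| "vars (Nu x t) = insert x (vars t)"

definition lfp01 :: "(real \<Rightarrow> real) \<Rightarrow> real" where
  "lfp01 f = Inf {v \<in> {0..1}. f v = v}"

definition gfp01 :: "(real \<Rightarrow> real) \<Rightarrow> real" where
  "gfp01 f = Sup {v \<in> {0..1}. f v = v}"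

fun eval :: "lterm \<Rightarrow> (nat \<Rightarrow> real) \<Rightarrow> real" where
  "eval (Var x) \<rho> = \<rho> x"
| "eval Zero \<rho> = 0"
| "eval One \<rho> = 1"
| "eval (Scale r t) \<rho> = r * eval t \<rho>"
| "eval (Join a b) \<rho> = max (eval a \<rho>) (eval b \<rho>)"
| "eval (Meet a b) \<rho> = min (eval a \<rho>) (eval b \<rho>)"
| "eval (OPlus a b) \<rho> = min (eval a \<rho> + eval b \<rho>) 1"
| "eval (OTimes a b) \<rho> = max (eval a \<rho> + eval b \<rho> - 1) 0"
| "eval (Mu x t) \<rho> = lfp01 (\<lambda>v. eval t (\<rho>(x := v)))"
| "eval (Nu x t) \<rho> = gfp01 (\<lambda>v. eval t (\<rho>(x := v)))"

definition const :: "real \<Rightarrow> lterm" where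
  "const r = Scale r One"

text \<open>Threshold modalities; y is the bound variable, required not to occur in t.\<close>
definition P_gt0 :: "nat \<Rightarrow> lterm \<Rightarrow> lterm" where
  "P_gt0 y t = Mu y (OPlus (Var y) t)"

definition P_eq1 :: "nat \<Rightarrow> lterm \<Rightarrow> lterm" where
  "P_eq1 y t = Nu y (OTimes (Var y) t)"

definition P_gt :: "real \<Rightarrow> nat \<Rightarrow> lterm \<Rightarrow> lterm" where
  "P_gt r y t = P_gt0 y (OTimes t (const (1 - r)))"

definition P_ge :: "real \<Rightarrow> nat \<Rightarrow> lterm \<Rightarrow> lterm" where
  "P_ge r y t = P_eq1 y (OPlus t (const (1 - r)))"

end

theory Submission
  imports Defs
begin

text \<open>With y fresh, the body of \<open>P_gt0 y t\<close> is \<open>v \<mapsto> min (v + a) 1\<close> for the constant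
  \<open>a = eval t \<rho>\<close>. For \<open>a > 0\<close> its only fixed point in [0,1] is 1, for \<open>a = 0\<close> every point is
  fixed and the least one is 0; \<open>P_eq1\<close> is dual. The other two modalities reduce to these,
  as \<open>t \<odot> (1 - r) > 0\<close> iff \<open>t > r\<close> and \<open>t \<oplus> (1 - r) = 1\<close> iff \<open>t \<ge> r\<close>. The only global
  fact needed is that terms denote values in [0,1]. It is proved simultaneously with
  monotonicity, which by Knaster-Tarski guarantees that the fixed points taken by \<open>\<mu>\<close> and
  \<open>\<nu>\<close> exist (otherwise \<open>lfp01\<close> and \<open>gfp01\<close> would be infima/suprema of empty sets).\<close>

lemma Inf_fixed_points_least:
  fixes f :: "'a::conditionally_complete_lattice \<Rightarrow> 'a"
  assumes "a \<le> b" and mono: "mono_on {a..b} f" and into: "f ` {a..b} \<subseteq> {a..b}"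
  defines "L \<equiv> Inf {v \<in> {a..b}. f v = v}"
  shows "L \<in> {a..b}" "f L = L" "\<And>w. w \<in> {a..b} \<Longrightarrow> f w \<le> w \<Longrightarrow> L \<le> w"
proof -
  define P where "P = {v \<in> {a..b}. f v \<le> v}"
  have "b \<in> P" using into \<open>a \<le> b\<close> by (auto simp: P_def image_subset_iff)
  have bdd: "bdd_below P" by (auto simp: P_def bdd_below_def)
  have below: "Inf P \<le> w" if "w \<in> P" for w using that bdd by (rule cInf_lower)
  have Inf_P: "Inf P \<in> {a..b}"
    using \<open>b \<in> P\<close> below by (auto simp: P_def intro: cInf_greatest)
  have prefixed: "f (Inf P) \<le> Inf P"
  proof (rule cInf_greatest)
    fix w assume "w \<in> P"
    then have "f (Inf P) \<le> f w" using Inf_P below by (auto simp: P_def intro: mono_onD[OF mono])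
    also have "f w \<le> w" using \<open>w \<in> P\<close> by (simp add: P_def)
    finally show "f (Inf P) \<le> w" .
  qed (use \<open>b \<in> P\<close> in blast)
  have "f (Inf P) \<in> {a..b}" using Inf_P into by blast
  with mono_onD[OF mono this Inf_P prefixed] have "f (Inf P) \<in> P" by (simp add: P_def)
  with prefixed have fixed: "f (Inf P) = Inf P" using below by (simp add: order.antisym)
  have "L = Inf P"
    unfolding L_def using Inf_P fixed below by (intro cInf_eq_minimum) (auto simp: P_def)
  then show "L \<in> {a..b}" "f L = L" "\<And>w. w \<in> {a..b} \<Longrightarrow> f w \<le> w \<Longrightarrow> L \<le> w"
    using Inf_P fixed below by (auto simp: P_def)
qed

lemma Sup_fixed_points_greatest:
  fixes f :: "'a::conditionally_complete_lattice \<Rightarrow> 'a"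
  assumes "a \<le> b" and mono: "mono_on {a..b} f" and into: "f ` {a..b} \<subseteq> {a..b}"
  defines "G \<equiv> Sup {v \<in> {a..b}. f v = v}"
  shows "G \<in> {a..b}" "f G = G" "\<And>w. w \<in> {a..b} \<Longrightarrow> w \<le> f w \<Longrightarrow> w \<le> G"
proof -
  define P where "P = {v \<in> {a..b}. v \<le> f v}"
  have "a \<in> P" using into \<open>a \<le> b\<close> by (auto simp: P_def image_subset_iff)
  have bdd: "bdd_above P" by (auto simp: P_def bdd_above_def)
  have above: "w \<le> Sup P" if "w \<in> P" for w using that bdd by (rule cSup_upper)
  have Sup_P: "Sup P \<in> {a..b}"
    using \<open>a \<in> P\<close> above by (auto simp: P_def intro: cSup_least)
  have postfixed: "Sup P \<le> f (Sup P)"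
  proof (rule cSup_least)
    fix w assume "w \<in> P"
    then have "w \<le> f w" by (simp add: P_def)
    also have "f w \<le> f (Sup P)"
      using \<open>w \<in> P\<close> Sup_P above by (auto simp: P_def intro: mono_onD[OF mono])
    finally show "w \<le> f (Sup P)" .
  qed (use \<open>a \<in> P\<close> in blast)
  have "f (Sup P) \<in> {a..b}" using Sup_P into by blast
  with mono_onD[OF mono Sup_P this postfixed] have "f (Sup P) \<in> P" by (simp add: P_def)
  with postfixed have fixed: "f (Sup P) = Sup P" using above by (simp add: order.antisym)
  have "G = Sup P"
    unfolding G_def using Sup_P fixed above by (intro cSup_eq_maximum) (auto simp: P_def)
  then show "G \<in> {a..b}" "f G = G" "\<And>w. w \<in> {a..b} \<Longrightarrow> w \<le> f w \<Longrightarrow> w \<le> G"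
    using Sup_P fixed above by (auto simp: P_def)
qed

definition unit_envs :: "(nat \<Rightarrow> real) set" where
  "unit_envs = {\<rho>. \<forall>i. \<rho> i \<in> {0..1}}"

lemma fun_upd_in_unit_envs: "\<rho> \<in> unit_envs \<Longrightarrow> v \<in> {0..1} \<Longrightarrow> \<rho>(x := v) \<in> unit_envs"
  by (simp add: unit_envs_def)

lemma unit_section_mono:
  assumes "F ` unit_envs \<subseteq> {0..1}" "mono_on unit_envs F" "\<rho> \<in> unit_envs"
  shows "(\<lambda>v. F (\<rho>(x := v))) ` {0..1} \<subseteq> {0..1}" "mono_on {0..1} (\<lambda>v. F (\<rho>(x := v)))"
  using assms by (auto simp: le_fun_def fun_upd_in_unit_envs intro!: mono_onI mono_onD[OF assms(2)])

lemma unit_mono_combine: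
  assumes "F ` unit_envs \<subseteq> {0..1}" "mono_on unit_envs F"
    and "G ` unit_envs \<subseteq> {0..1}" "mono_on unit_envs G"
    and "\<And>u v. u \<in> {0..1} \<Longrightarrow> v \<in> {0..1} \<Longrightarrow> h u v \<in> {0..1}"
    and "\<And>u v u' v'. u \<le> u' \<Longrightarrow> v \<le> v' \<Longrightarrow> h u v \<le> h u' v'"
    and "\<And>\<rho>. H \<rho> = h (F \<rho>) (G \<rho>)"
  shows "H ` unit_envs \<subseteq> {0..1} \<and> mono_on unit_envs H"
proof (intro conjI mono_onI)
  show "H ` unit_envs \<subseteq> {0..1}" using assms(1,3,5) by (simp add: assms(7) image_subset_iff)
  fix \<rho> \<rho>' assume "\<rho> \<in> unit_envs" "\<rho>' \<in> unit_envs" "\<rho> \<le> \<rho>'"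
  then show "H \<rho> \<le> H \<rho>'"
    unfolding assms(7) by (intro assms(6) mono_onD[OF assms(2)] mono_onD[OF assms(4)])
qed

lemma lfp01_binder_unit_mono:
  fixes x :: nat
  assumes into: "F ` unit_envs \<subseteq> {0..1}" and mono: "mono_on unit_envs F"
  defines "M \<equiv> \<lambda>\<rho>. lfp01 (\<lambda>v. F (\<rho>(x := v)))"
  shows "M ` unit_envs \<subseteq> {0..1}" "mono_on unit_envs M"
proof -
  have lfp: "M \<rho> \<in> {0..1}" "F (\<rho>(x := M \<rho>)) = M \<rho>"
    "\<And>w. w \<in> {0..1} \<Longrightarrow> F (\<rho>(x := w)) \<le> w \<Longrightarrow> M \<rho> \<le> w"
    if "\<rho> \<in> unit_envs" for \<rho>
    using Inf_fixed_points_least[of 0 1 "\<lambda>v. F (\<rho>(x := v))"] unit_section_mono[OF into mono that]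
    by (simp_all add: M_def lfp01_def)
  show "M ` unit_envs \<subseteq> {0..1}" using lfp(1) by auto
  show "mono_on unit_envs M"
  proof (rule mono_onI)
    fix \<rho> \<rho>' assume envs: "\<rho> \<in> unit_envs" "\<rho>' \<in> unit_envs" and "\<rho> \<le> \<rho>'"
    let ?w = "M \<rho>'"
    have "F (\<rho>(x := ?w)) \<le> F (\<rho>'(x := ?w))"
      using envs lfp(1) \<open>\<rho> \<le> \<rho>'\<close>
      by (intro mono_onD[OF mono]) (auto simp: le_fun_def fun_upd_in_unit_envs)
    also have "\<dots> = ?w" using lfp(2) envs(2) .
    finally show "M \<rho> \<le> ?w" using lfp(1,3) envs by auto
  qed
qed

lemma gfp01_binder_unit_mono:
  fixes x :: nat
  assumes into: "F ` unit_envs \<subseteq> {0..1}" and mono: "mono_on unit_envs F"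
  defines "N \<equiv> \<lambda>\<rho>. gfp01 (\<lambda>v. F (\<rho>(x := v)))"
  shows "N ` unit_envs \<subseteq> {0..1}" "mono_on unit_envs N"
proof -
  have gfp: "N \<rho> \<in> {0..1}" "F (\<rho>(x := N \<rho>)) = N \<rho>"
    "\<And>w. w \<in> {0..1} \<Longrightarrow> w \<le> F (\<rho>(x := w)) \<Longrightarrow> w \<le> N \<rho>"
    if "\<rho> \<in> unit_envs" for \<rho>
    using Sup_fixed_points_greatest[of 0 1 "\<lambda>v. F (\<rho>(x := v))"] unit_section_mono[OF into mono that]
    by (simp_all add: N_def gfp01_def)
  show "N ` unit_envs \<subseteq> {0..1}" using gfp(1) by auto
  show "mono_on unit_envs N"
  proof (rule mono_onI)
    fix \<rho> \<rho>' assume envs: "\<rho> \<in> unit_envs" "\<rho>' \<in> unit_envs" and "\<rho> \<le> \<rho>'"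
    let ?w = "N \<rho>"
    have "?w = F (\<rho>(x := ?w))" using gfp(2) envs(1) by simp
    also have "\<dots> \<le> F (\<rho>'(x := ?w))"
      using envs gfp(1) \<open>\<rho> \<le> \<rho>'\<close>
      by (intro mono_onD[OF mono]) (auto simp: le_fun_def fun_upd_in_unit_envs)
    finally show "?w \<le> N \<rho>'" using gfp(1,3) envs by auto
  qed
qed

lemma eval_unit_interval_mono:
  assumes "wf_lterm t"
  shows "eval t ` unit_envs \<subseteq> {0..1} \<and> mono_on unit_envs (eval t)"
  using assms
proof (induction t)
  case (Scale r t)
  then show ?case
    by (force simp: mono_on_def intro: mult_left_mono mult_le_one)
next
  case (Join a b)
  show ?case
    by (rule unit_mono_combine[of "eval a" "eval b" max])
      (use Join in \<open>auto intro: max.mono\<close>)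
next
  case (Meet a b)
  show ?case
    by (rule unit_mono_combine[of "eval a" "eval b" min])
      (use Meet in \<open>auto intro: min.mono\<close>)
next
  case (OPlus a b)
  show ?case
    by (rule unit_mono_combine[of "eval a" "eval b" "\<lambda>u v. min (u + v) 1"])
      (use OPlus in \<open>auto\<close>)
next
  case (OTimes a b)
  show ?case
    by (rule unit_mono_combine[of "eval a" "eval b" "\<lambda>u v. max (u + v - 1) 0"])
      (use OTimes in \<open>auto\<close>)
next
  case (Mu x t)
  then show ?case using lfp01_binder_unit_mono[of "eval t" x] by (simp add: image_def)
next
  case (Nu x t)
  then show ?case using gfp01_binder_unit_mono[of "eval t" x] by (simp add: image_def)
qed (auto simp: unit_envs_def mono_on_def le_fun_def)

lemma eval_fun_upd_fresh: "y \<notin> vars t \<Longrightarrow> eval t (\<rho>(y := v)) = eval t \<rho>"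
  by (induction t arbitrary: \<rho>) (auto simp: fun_upd_twist)

lemma eval_P_gt0:
  assumes "y \<notin> vars t" "0 \<le> eval t \<rho>"
  shows "eval (P_gt0 y t) \<rho> = (if eval t \<rho> > 0 then 1 else 0)"
proof -
  let ?a = "eval t \<rho>"
  have "{v \<in> {0..1}. min (v + ?a) 1 = v} = (if ?a > 0 then {1} else {0..1})"
    using assms(2) by (auto simp: min_def)
  then show ?thesis
    by (simp add: P_gt0_def lfp01_def eval_fun_upd_fresh[OF assms(1)])
qed

lemma eval_P_eq1:
  assumes "y \<notin> vars t" "eval t \<rho> \<le> 1"
  shows "eval (P_eq1 y t) \<rho> = (if eval t \<rho> = 1 then 1 else 0)"
proof -
  let ?a = "eval t \<rho>"
  have "{v \<in> {0..1}. max (v + ?a - 1) 0 = v} = (if ?a = 1 then {0..1} else {0})"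
    using assms(2) by (auto simp: max_def)
  then show ?thesis
    by (simp add: P_eq1_def gfp01_def eval_fun_upd_fresh[OF assms(1)])
qed

lemma eval_P_gt:
  assumes "y \<notin> vars t"
  shows "eval (P_gt r y t) \<rho> = (if eval t \<rho> > r then 1 else 0)"
  using eval_P_gt0[of y "OTimes t (const (1 - r))" \<rho>] assms
  by (simp add: P_gt_def const_def max_def)

lemma eval_P_ge:
  assumes "y \<notin> vars t"
  shows "eval (P_ge r y t) \<rho> = (if eval t \<rho> \<ge> r then 1 else 0)"
  using eval_P_eq1[of y "OPlus t (const (1 - r))" \<rho>] assms
  by (auto simp: P_ge_def const_def min_def)

theorem mainTheorem8:
  fixes t :: lterm and \<rho> :: "nat \<Rightarrow> real" and y :: nat and r :: real
  assumes "wf_lterm t"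
    and "\<forall>i. 0 \<le> \<rho> i \<and> \<rho> i \<le> 1"
    and "y \<notin> vars t"
  shows "eval (P_gt0 y t) \<rho> = (if eval t \<rho> > 0 then 1 else 0)
       \<and> eval (P_eq1 y t) \<rho> = (if eval t \<rho> = 1 then 1 else 0)
       \<and> (0 < r \<and> r < 1 \<longrightarrow>
            eval (P_gt r y t) \<rho> = (if eval t \<rho> > r then 1 else 0)
          \<and> eval (P_ge r y t) \<rho> = (if eval t \<rho> \<ge> r then 1 else 0))"
proof -
  have "\<rho> \<in> unit_envs" using assms(2) by (simp add: unit_envs_def)
  then have "eval t \<rho> \<in> {0..1}" using eval_unit_interval_mono[OF assms(1)] by blast
  then show ?thesis
    using assms(3) by (simp add: eval_P_gt0 eval_P_eq1 eval_P_gt eval_P_ge)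
qed

end
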